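(* Let $(P_t)_{t\in\mathbb{R}_+}$ be a stochastically monotone Feller semigroup on $\mathbb{R}$. For $x\in\mathbb{R}$, $t\ge0$, $u\in[0,1]$ let $F^{[-1]}_{x,t}(u)=\inf\{y\in\mathbb{R}:P_t(x,(-\infty,y])\ge u\}\in\overline{\mathbb{R}}$, and let $F^{[-1]}_{-\infty,t}\equiv-\infty$, $F^{[-1]}_{+\infty,t}\equiv+\infty$. Then: (a) for all $x\in\overline{\mathbb{R}}$ and $t\ge0$, $u\mapsto F^{[-1]}_{x,t}(u)$ is non-decreasing; (b) for all $x\in\mathbb{R}$, $t\ge0$, $u\in(0,1)$, $F^{[-1]}_{x,t}(u)\in\mathbb{R}$; (c) for all $t\ge0$ and $u\in(0,1)$, $x\mapsto F^{[-1]}_{x,t}(u)$ is non-decreasing on $\overline{\mathbb{R}}$; (d) if $U$ is uniform on $[0,1]$, then for all $x\in\overline{\mathbb{R}}$, $t\ge0$, the law of $F^{[-1]}_{x,t}(U)$ is $\tilde{P}_t(x,\cdot)$; (e) for all $t\ge0$ and $x\in\overline{\mathbb{R}}$, for all $u\in[0,1]$ outside an at most countable set, the map $y\mapsto F^{[-1]}_{y,t}(u)$ from $\overline{\mathbb{R}}$ to $\overline{\mathbb{R}}$ is continuous at $x$.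
   Context: $\overline{\mathbb{R}}=[-\infty,+\infty]$ with the topology given by the metric $|\tanh y-\tanh x|$. $\tilde{P}_t$ is the kernel on $\overline{\mathbb{R}}$ with $\tilde{P}_t(x,B)=P_t(x,B\cap\mathbb{R})$ for $x\in\mathbb{R}$ and $\tilde{P}_t(\pm\infty,\cdot)=\delta_{\pm\infty}$. Feller semigroup on $\mathbb{R}$: Markov semigroup with $P_tf\in\mathcal{C}_0(\mathbb{R})$ for $f\in\mathcal{C}_0(\mathbb{R})$ and $\sup_x|P_tf-f|\to0$ as $t\to0^+$; stochastically monotone: $P_tf$ non-decreasing for bounded non-decreasing Borel $f$. *)

theory Defs
  imports "HOL-Probability.Probability"
begin

text \<open>A transition semigroup on the reals is modelled as P :: real => real => real measure,
  P t x being the measure P_t(x, .). Only t >= 0 is relevant.\<close>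

definition Pf :: "(real \<Rightarrow> real \<Rightarrow> real measure) \<Rightarrow> real \<Rightarrow> (real \<Rightarrow> real) \<Rightarrow> real \<Rightarrow> real" where
  "Pf P t f x = (\<integral>y. f y \<partial>(P t x))"

definition markov_semigroup :: "(real \<Rightarrow> real \<Rightarrow> real measure) \<Rightarrow> bool" where
  "markov_semigroup P \<longleftrightarrow>
     (\<forall>t\<ge>0. \<forall>x. prob_space (P t x) \<and> sets (P t x) = sets borel) \<and>
     (\<forall>t\<ge>0. \<forall>B\<in>sets borel. (\<lambda>x. measure (P t x) B) \<in> borel_measurable borel) \<and>
     (\<forall>x. P 0 x = return borel x) \<and>
     (\<forall>s\<ge>0. \<forall>t\<ge>0. \<forall>x. \<forall>B\<in>sets borel.
        emeasure (P (s + t) x) B = (\<integral>\<^sup>+ y. emeasure (P t y) B \<partial>(P s x)))"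

definition C0 :: "(real \<Rightarrow> real) \<Rightarrow> bool" where
  "C0 f \<longleftrightarrow> continuous_on UNIV f \<and> (f \<longlongrightarrow> 0) at_infinity"

definition feller_semigroup :: "(real \<Rightarrow> real \<Rightarrow> real measure) \<Rightarrow> bool" where
  "feller_semigroup P \<longleftrightarrow> markov_semigroup P \<and>
     (\<forall>f. C0 f \<longrightarrow>
        (\<forall>t\<ge>0. C0 (Pf P t f)) \<and>
        (\<forall>e>0. \<exists>d>0. \<forall>t. 0 < t \<and> t < d \<longrightarrow> (\<forall>x. \<bar>Pf P t f x - f x\<bar> \<le> e)))"

definition stoch_monotone :: "(real \<Rightarrow> real \<Rightarrow> real measure) \<Rightarrow> bool" where
  "stoch_monotone P \<longleftrightarrow>
     (\<forall>t\<ge>0. \<forall>f. f \<in> borel_measurable borel \<and> bounded (range f) \<and> mono f \<longrightarrow> mono (Pf P t f))"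

definition Finv :: "(real \<Rightarrow> real \<Rightarrow> real measure) \<Rightarrow> real \<Rightarrow> ereal \<Rightarrow> real \<Rightarrow> ereal" where
  "Finv P t x u = (case x of
      ereal r \<Rightarrow> Inf (ereal ` {y. measure (P t r) {..y} \<ge> u})
    | PInfty \<Rightarrow> \<infinity>
    | MInfty \<Rightarrow> -\<infinity>)"

definition Ptilde :: "(real \<Rightarrow> real \<Rightarrow> real measure) \<Rightarrow> real \<Rightarrow> ereal \<Rightarrow> ereal measure" where
  "Ptilde P t x = (case x of
      ereal r \<Rightarrow> distr (P t r) borel ereal
    | PInfty \<Rightarrow> return borel \<infinity>
    | MInfty \<Rightarrow> return borel (-\<infinity>))"

end

theory Submission
  imports Defs
begin

(* For real x, F^[-1]_{x,t} is the quantile function of the law P_t(x,.), so monotonicity in u,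
   finiteness on ]0,1[ and the law of F^[-1]_{x,t}(U) are standard facts about quantiles, and
   monotonicity in x is stochastic monotonicity applied to indicators of half-lines.

   Continuity in x rests on the Feller property applied to trapezoidal functions h in C_0 squeezed
   between the indicators of two nested intervals: x |-> P_t h(x) is continuous and vanishes at
   infinity. Near a real x this carries strict inequalities u < P_t(x,]-oo,c]) and
   P_t(x,]-oo,d]) < u over to nearby starting points, at the price of moving c or d slightly.
   Hence x |-> F^[-1]_{x,t}(u) is continuous at x whenever u is a continuity point of the monotone
   map F^[-1]_{x,t}, which excludes only countably many u. At +oo (resp. -oo), vanishing at
   infinity together with stochastic monotonicity forces P_t(x,]-oo,y]) to tend to 0 (resp. 1),
   so F^[-1]_{x,t}(u) tends to +oo (resp. -oo) for every u in ]0,1[. *)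

definition trapezoid :: "real \<Rightarrow> real \<Rightarrow> real \<Rightarrow> real \<Rightarrow> real \<Rightarrow> real" where
  "trapezoid a b c d x = max 0 (min 1 (min ((x - a) / (b - a)) ((d - x) / (d - c))))"

lemma trapezoid_nonneg: "0 \<le> trapezoid a b c d x"
  and trapezoid_le_1: "trapezoid a b c d x \<le> 1"
  by (simp_all add: trapezoid_def)

lemma trapezoid_eq_0:
  assumes "a < b" "c < d" "x \<le> a \<or> d \<le> x"
  shows "trapezoid a b c d x = 0"
proof -
  have "(x - a) / (b - a) \<le> 0 \<or> (d - x) / (d - c) \<le> 0"
    using assms by (auto simp: divide_nonpos_pos)
  then show ?thesis by (auto simp: trapezoid_def)
qed

lemma trapezoid_eq_1:
  assumes "a < b" "c < d" "b \<le> x" "x \<le> c"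
  shows "trapezoid a b c d x = 1"
  using assms by (simp add: trapezoid_def divide_simps)

lemma continuous_on_trapezoid:
  "a < b \<Longrightarrow> c < d \<Longrightarrow> continuous_on UNIV (trapezoid a b c d)"
  unfolding trapezoid_def by (intro continuous_intros) auto

lemma C0_trapezoid:
  assumes "a < b" "c < d"
  shows "C0 (trapezoid a b c d)"
proof -
  have "\<forall>\<^sub>F x in at_infinity. trapezoid a b c d x = 0"
    unfolding eventually_at_infinity
    by (rule exI[of _ "\<bar>a\<bar> + \<bar>d\<bar> + 1"]) (auto intro!: trapezoid_eq_0 assms)
  then show ?thesis
    using continuous_on_trapezoid[OF assms] by (simp add: C0_def tendsto_eventually)
qed

context real_distribution
begin

lemma integrable_trapezoid:
  assumes "a < b" "c < d"
  shows "integrable M (trapezoid a b c d)"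
proof (rule integrable_const_bound[where B=1])
  show "trapezoid a b c d \<in> borel_measurable M"
    using borel_measurable_continuous_onI[OF continuous_on_trapezoid[OF assms]]
    by (simp add: measurable_cong_sets[OF events_eq_borel refl])
qed (simp add: trapezoid_nonneg trapezoid_le_1)

lemma integrable_indicator_real [simp]:
  "integrable M (indicator A :: real \<Rightarrow> real) \<longleftrightarrow> A \<in> sets borel"
  by (simp add: integrable_indicator_iff less_top[symmetric])

lemma measure_le_integral_trapezoid:
  assumes "a < b" "c < d"
  shows "measure M {b<..c} \<le> (\<integral>x. trapezoid a b c d x \<partial>M)"
proof -
  have "measure M {b<..c} = (\<integral>x. indicator {b<..c} x \<partial>M)" by simp
  also have "\<dots> \<le> (\<integral>x. trapezoid a b c d x \<partial>M)"
    using assms by (intro integral_mono integrable_trapezoid)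
      (auto simp: trapezoid_eq_1 trapezoid_nonneg split: split_indicator)
  finally show ?thesis .
qed

lemma integral_trapezoid_le_measure:
  assumes "a < b" "c < d"
  shows "(\<integral>x. trapezoid a b c d x \<partial>M) \<le> measure M {a<..<d}"
proof -
  have "(\<integral>x. trapezoid a b c d x \<partial>M) \<le> (\<integral>x. indicator {a<..<d} x \<partial>M)"
    using assms by (intro integral_mono integrable_trapezoid)
      (auto simp: trapezoid_eq_0 trapezoid_le_1 not_less split: split_indicator)
  then show ?thesis by simp
qed

end

(* Meaningful for 0 < u < 1 only: otherwise the set is empty or unbounded below, and Inf returns
   an unspecified real. *)
definition quantile :: "real measure \<Rightarrow> real \<Rightarrow> real" where
  "quantile M u = Inf {z. u \<le> cdf M z}"

context real_distribution
begin

lemma quantile_le_iff: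
  assumes "0 < u" "u < 1"
  shows "quantile M u \<le> z \<longleftrightarrow> u \<le> cdf M z"
proof -
  interpret cdf_distribution M
    by (simp add: cdf_distribution_def real_distribution_axioms)
  show ?thesis
    unfolding quantile_def by (rule pseudoinverse[OF assms, symmetric])
qed

lemma mono_on_quantile: "mono_on {0<..<1} (quantile M)"
proof (rule mono_onI)
  fix u v :: real assume "u \<in> {0<..<1}" "v \<in> {0<..<1}" "u \<le> v"
  then show "quantile M u \<le> quantile M v"
    using quantile_le_iff by (metis greaterThanLessThan_iff order.trans order.refl)
qed

lemma Inf_ereal_cdf_eq_quantile:
  assumes "0 < u" "u < 1"
  shows "Inf (ereal ` {z. u \<le> measure M {..z}}) = ereal (quantile M u)"
proof -
  have "{z. u \<le> measure M {..z}} = {quantile M u..}"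
    using quantile_le_iff[OF assms] by (auto simp: cdf_def)
  then show ?thesis
    by (auto intro: cInf_eq_minimum)
qed

lemma distr_quantile: "distr (restrict_space lborel {0<..<1}) borel (quantile M) = M"
proof -
  interpret cdf_distribution M
    by (simp add: cdf_distribution_def real_distribution_axioms)
  show ?thesis
    using distr_I_eq_M by (simp add: quantile_def[abs_def])
qed

end

lemma distr_uniform_01_eq_distr_restrict:
  assumes f: "f \<in> borel \<rightarrow>\<^sub>M N"
  shows "distr (uniform_measure lborel {0..1::real}) N f =
    distr (restrict_space lborel {0<..<1}) N f"
proof (rule measure_eqI)
  fix A assume "A \<in> sets (distr (uniform_measure lborel {0..1::real}) N f)"
  then have A: "A \<in> sets N" by simp
  have fA: "f -` A \<in> sets borel"
    using measurable_sets[OF f A] by simp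
  have f': "f \<in> uniform_measure lborel {0..1} \<rightarrow>\<^sub>M N"
    using f measurable_cong_sets[of "uniform_measure lborel {0..1}" borel N N] by simp
  have "emeasure (distr (uniform_measure lborel {0..1}) N f) A =
      emeasure (uniform_measure lborel {0..1}) (f -` A)"
    using f' A by (simp add: emeasure_distr)
  also have "\<dots> = emeasure lborel ({0..1} \<inter> f -` A)"
    using fA by (simp add: emeasure_uniform_measure divide_ennreal_def)
  also have "\<dots> = emeasure lborel ({0<..<1} \<inter> f -` A)"
  proof (rule emeasure_eq_AE)
    show "AE x in lborel. x \<in> {0..1} \<inter> f -` A \<longleftrightarrow> x \<in> {0<..<1} \<inter> f -` A"
      using AE_lborel_singleton[of 0] AE_lborel_singleton[of 1] by eventually_elim auto
  qed (use fA in simp_all)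
  also have "\<dots> =
      emeasure (restrict_space lborel {0<..<1}) (f -` A \<inter> space (restrict_space lborel {0<..<1}))"
    using fA by (simp add: emeasure_restrict_space space_restrict_space Int_commute)
  also have "\<dots> = emeasure (distr (restrict_space lborel {0<..<1}) N f) A"
    using f A by (simp add: emeasure_distr measurable_restrict_space1)
  finally show "emeasure (distr (uniform_measure lborel {0..1}) N f) A =
      emeasure (distr (restrict_space lborel {0<..<1}) N f) A" .
qed simp

lemma borel_measurable_mono_linorder:
  fixes f :: "real \<Rightarrow> 'a::{linorder_topology, second_countable_topology}"
  assumes "mono f"
  shows "f \<in> borel_measurable borel"
proof (rule borel_measurableI_less)
  fix y
  have "is_interval {x. f x < y}"
    unfolding is_interval_1 using assms by (auto dest: monoD intro: le_less_trans)
  then show "{x \<in> space borel. f x < y} \<in> sets borel"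
    using real_interval_borel_measurable by simp
qed

lemma at_MInf_ereal_eq_at_bot: "at (-\<infinity>) = filtermap ereal at_bot"
proof -
  have "{-\<infinity>::ereal..} = UNIV"
    by auto
  then show ?thesis
    using at_within_Ici_at_right[of "-\<infinity>::ereal"] by (simp add: at_right_MInf)
qed

lemma isCont_ereal_lift:
  fixes g :: "ereal \<Rightarrow> ereal"
  assumes "\<And>y. g (ereal y) = ereal (f y)" "isCont f r"
  shows "isCont g (ereal r)"
  using assms(2)
  unfolding continuous_at unfolding at_ereal tendsto_compose_filtermap[symmetric]
  by (simp add: comp_def assms(1))

lemma isCont_ereal_lift_PInf:
  fixes g :: "ereal \<Rightarrow> ereal"
  assumes "\<And>y. g (ereal y) = ereal (f y)" "g \<infinity> = \<infinity>" "filterlim f at_top at_top"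
  shows "isCont g \<infinity>"
  using assms(3)
  unfolding continuous_at unfolding at_infty_ereal_eq_at_top tendsto_compose_filtermap[symmetric]
  by (simp add: comp_def assms(1,2) tendsto_PInfty_eq_at_top)

lemma isCont_ereal_lift_MInf:
  fixes g :: "ereal \<Rightarrow> ereal"
  assumes "\<And>y. g (ereal y) = ereal (f y)" "g (-\<infinity>) = -\<infinity>" "filterlim f at_bot at_bot"
  shows "isCont g (-\<infinity>)"
  using assms(3)
  unfolding continuous_at unfolding at_MInf_ereal_eq_at_bot tendsto_compose_filtermap[symmetric]
  by (simp add: comp_def assms(1,2) tendsto_MInfty filterlim_at_bot_dense)

locale feller_kernel =
  fixes K :: "real \<Rightarrow> real measure"
  assumes real_distribution_K: "real_distribution (K x)"
    and C0_integral_K: "C0 h \<Longrightarrow> C0 (\<lambda>x. \<integral>y. h y \<partial>K x)"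
begin

lemma eventually_integral_gt:
  assumes "C0 h" "c < (\<integral>y. h y \<partial>K x)"
  shows "\<forall>\<^sub>F x' in nhds x. c < (\<integral>y. h y \<partial>K x')"
proof -
  have "isCont (\<lambda>x. \<integral>y. h y \<partial>K x) x"
    using C0_integral_K[OF assms(1)] by (simp add: C0_def continuous_on_eq_continuous_at)
  then have "((\<lambda>x. \<integral>y. h y \<partial>K x) \<longlongrightarrow> (\<integral>y. h y \<partial>K x)) (nhds x)"
    using tendsto_at_iff_tendsto_nhds isCont_def by metis
  then show ?thesis
    using assms(2) by (rule order_tendstoD)
qed

lemma eventually_cdf_gt:
  assumes "u < cdf (K x) c" "c < d"
  shows "\<forall>\<^sub>F x' in nhds x. u < cdf (K x') d"
proof -
  interpret K: real_distribution "K x'" for x'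
    by (rule real_distribution_K)
  have "\<forall>\<^sub>F m in at_bot. m < c \<and> cdf (K x) m < cdf (K x) c - u"
    using assms(1)
    by (intro eventually_conj eventually_gt_at_bot order_tendstoD(2)[OF K.cdf_lim_at_bot]) simp
  then obtain m where m: "m < c" "cdf (K x) m < cdf (K x) c - u"
    using eventually_happens'[OF trivial_limit_at_bot_linorder] by blast
  let ?h = "trapezoid (m - 1) m c d"
  have "cdf (K x) c - cdf (K x) m = measure (K x) {m<..c}"
    using m(1) by (rule K.cdf_diff_eq)
  then have "u < measure (K x) {m<..c}"
    using m(2) by linarith
  also have "\<dots> \<le> (\<integral>y. ?h y \<partial>K x)"
    using assms m by (intro K.measure_le_integral_trapezoid) auto
  finally have "\<forall>\<^sub>F x' in nhds x. u < (\<integral>y. ?h y \<partial>K x')"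
    using assms m by (intro eventually_integral_gt C0_trapezoid) auto
  then show ?thesis
  proof eventually_elim
    case (elim x')
    have "(\<integral>y. ?h y \<partial>K x') \<le> measure (K x') {m - 1<..<d}"
      using assms m by (intro K.integral_trapezoid_le_measure) auto
    also have "\<dots> \<le> cdf (K x') d"
      unfolding cdf_def by (intro K.finite_measure_mono) auto
    finally show ?case
      using elim by simp
  qed
qed

lemma eventually_cdf_less:
  assumes "cdf (K x) d < u" "c < d"
  shows "\<forall>\<^sub>F x' in nhds x. cdf (K x') c < u"
proof -
  interpret K: real_distribution "K x'" for x'
    by (rule real_distribution_K)
  have "\<forall>\<^sub>F N in at_top. d < N \<and> cdf (K x) d + (1 - u) < cdf (K x) N"
    using assms(1)
    by (intro eventually_conj eventually_gt_at_top order_tendstoD(1)[OF K.cdf_lim_at_top_prob]) simp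
  then obtain N where N: "d < N" "cdf (K x) d + (1 - u) < cdf (K x) N"
    using eventually_happens'[OF trivial_limit_at_top_linorder] by blast
  let ?h = "trapezoid c d N (N + 1)"
  have "cdf (K x) N - cdf (K x) d = measure (K x) {d<..N}"
    using N(1) by (rule K.cdf_diff_eq)
  then have "1 - u < measure (K x) {d<..N}"
    using N(2) by linarith
  also have "\<dots> \<le> (\<integral>y. ?h y \<partial>K x)"
    using assms N by (intro K.measure_le_integral_trapezoid) auto
  finally have "\<forall>\<^sub>F x' in nhds x. 1 - u < (\<integral>y. ?h y \<partial>K x')"
    using assms N by (intro eventually_integral_gt C0_trapezoid) auto
  then show ?thesis
  proof eventually_elim
    case (elim x')
    have "(\<integral>y. ?h y \<partial>K x') \<le> measure (K x') {c<..<N + 1}"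
      using assms N by (intro K.integral_trapezoid_le_measure) auto
    also have "\<dots> \<le> measure (K x') (UNIV - {..c})"
      by (intro K.finite_measure_mono) auto
    also have "\<dots> = 1 - cdf (K x') c"
      using K.prob_compl[of "{..c}"] by (simp add: cdf_def)
    finally show ?case
      using elim by simp
  qed
qed

lemma eventually_quantile_K_less:
  assumes "0 < u" "u < v" "v < 1" "quantile (K x) v < z"
  shows "\<forall>\<^sub>F x' in nhds x. quantile (K x') u < z"
proof -
  interpret K: real_distribution "K x'" for x'
    by (rule real_distribution_K)
  have "u < cdf (K x) (quantile (K x) v)"
    using K.quantile_le_iff[of v x "quantile (K x) v"] assms by simp
  moreover obtain d where d: "quantile (K x) v < d" "d < z"
    using assms(4) dense by blast
  ultimately have "\<forall>\<^sub>F x' in nhds x. u < cdf (K x') d"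
    using eventually_cdf_gt by blast
  then show ?thesis
  proof eventually_elim
    case (elim x')
    then have "quantile (K x') u \<le> d"
      using K.quantile_le_iff[of u x' d] assms by simp
    then show ?case
      using d(2) by simp
  qed
qed

lemma eventually_quantile_K_greater:
  assumes "0 < v" "v < u" "u < 1" "w < quantile (K x) v"
  shows "\<forall>\<^sub>F x' in nhds x. w < quantile (K x') u"
proof -
  interpret K: real_distribution "K x'" for x'
    by (rule real_distribution_K)
  obtain d where d: "w < d" "d < quantile (K x) v"
    using assms(4) dense by blast
  then have "cdf (K x) d < u"
    using K.quantile_le_iff[of v x d] assms by simp
  then have "\<forall>\<^sub>F x' in nhds x. cdf (K x') w < u"
    using d(1) by (rule eventually_cdf_less)
  then show ?thesis
  proof eventually_elim
    case (elim x')
    then show ?case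
      using K.quantile_le_iff[of u x' w] assms by simp
  qed
qed

lemma isCont_quantile_K:
  assumes u: "0 < u" "u < 1" and cont: "isCont (quantile (K x)) u"
  shows "isCont (\<lambda>x'. quantile (K x') u) x"
proof -
  have "((\<lambda>x'. quantile (K x') u) \<longlongrightarrow> quantile (K x) u) (nhds x)"
  proof (rule order_tendstoI)
    fix z assume "quantile (K x) u < z"
    moreover have "(quantile (K x) \<longlongrightarrow> quantile (K x) u) (at_right u)"
      using cont unfolding isCont_def by (rule tendsto_within_subset) simp
    ultimately have "\<forall>\<^sub>F v in at_right u. quantile (K x) v < z \<and> u < v \<and> v < 1"
      using u by (intro eventually_conj order_tendstoD(2) eventually_at_rightI[of u 1]) auto
    then obtain v where "quantile (K x) v < z" "u < v" "v < 1"
      using eventually_happens'[OF trivial_limit_at_right_real] by blast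
    with u show "\<forall>\<^sub>F x' in nhds x. quantile (K x') u < z"
      by (intro eventually_quantile_K_less)
  next
    fix w assume "w < quantile (K x) u"
    moreover have "(quantile (K x) \<longlongrightarrow> quantile (K x) u) (at_left u)"
      using cont unfolding isCont_def by (rule tendsto_within_subset) simp
    ultimately have "\<forall>\<^sub>F v in at_left u. w < quantile (K x) v \<and> 0 < v \<and> v < u"
      using u by (intro eventually_conj order_tendstoD(1) eventually_at_leftI[of 0 u]) auto
    then obtain v where "w < quantile (K x) v" "0 < v" "v < u"
      using eventually_happens'[OF trivial_limit_at_left_real] by blast
    with u show "\<forall>\<^sub>F x' in nhds x. w < quantile (K x') u"
      by (intro eventually_quantile_K_greater)
  qed
  then show ?thesis
    using tendsto_at_iff_tendsto_nhds isCont_def by metis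
qed

end

locale monotone_feller_kernel = feller_kernel +
  assumes cdf_K_antimono: "x \<le> x' \<Longrightarrow> cdf (K x') z \<le> cdf (K x) z"
begin

lemma cdf_K_tendsto_0: "((\<lambda>x. cdf (K x) z) \<longlongrightarrow> 0) at_top"
proof -
  interpret K: real_distribution "K x'" for x'
    by (rule real_distribution_K)
  show ?thesis
  proof (rule order_tendstoI)
    fix e :: real assume "0 < e"
    have "\<forall>\<^sub>F m in at_bot. m < z \<and> cdf (K 0) m < e / 2"
      using \<open>0 < e\<close>
      by (intro eventually_conj eventually_gt_at_bot order_tendstoD(2)[OF K.cdf_lim_at_bot]) simp
    then obtain m where m: "m < z" "cdf (K 0) m < e / 2"
      using eventually_happens'[OF trivial_limit_at_bot_linorder] by blast
    let ?h = "trapezoid (m - 1) m z (z + 1)"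
    have "((\<lambda>x. \<integral>y. ?h y \<partial>K x) \<longlongrightarrow> 0) at_top"
      using C0_integral_K[OF C0_trapezoid] at_top_le_at_infinity
      by (auto simp: C0_def intro: tendsto_mono)
    then have "\<forall>\<^sub>F x in at_top. 0 \<le> x \<and> (\<integral>y. ?h y \<partial>K x) < e / 2"
      using \<open>0 < e\<close> by (intro eventually_conj eventually_ge_at_top order_tendstoD(2)) auto
    then show "\<forall>\<^sub>F x in at_top. cdf (K x) z < e"
    proof eventually_elim
      case (elim x)
      have "cdf (K x) z - cdf (K x) m = measure (K x) {m<..z}"
        using m(1) by (rule K.cdf_diff_eq)
      also have "\<dots> \<le> (\<integral>y. ?h y \<partial>K x)"
        using m by (intro K.measure_le_integral_trapezoid) auto
      moreover have "cdf (K x) m \<le> cdf (K 0) m"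
        using elim by (intro cdf_K_antimono) simp
      ultimately show ?case
        using elim[THEN conjunct2] m(2) by linarith
    qed
  next
    fix e :: real assume "e < 0"
    then show "\<forall>\<^sub>F x in at_top. e < cdf (K x) z"
      by (intro always_eventually allI) (meson K.cdf_nonneg less_le_trans)
  qed
qed

lemma cdf_K_tendsto_1: "((\<lambda>x. cdf (K x) z) \<longlongrightarrow> 1) at_bot"
proof -
  interpret K: real_distribution "K x'" for x'
    by (rule real_distribution_K)
  show ?thesis
  proof (rule order_tendstoI)
    fix e :: real assume "e < 1"
    have "\<forall>\<^sub>F N in at_top. z < N \<and> 1 - (1 - e) / 2 < cdf (K 0) N"
      using \<open>e < 1\<close>
      by (intro eventually_conj eventually_gt_at_top order_tendstoD(1)[OF K.cdf_lim_at_top_prob]) simp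
    then obtain N where N: "z < N" "1 - (1 - e) / 2 < cdf (K 0) N"
      using eventually_happens'[OF trivial_limit_at_top_linorder] by blast
    let ?h = "trapezoid (z - 1) z N (N + 1)"
    have "((\<lambda>x. \<integral>y. ?h y \<partial>K x) \<longlongrightarrow> 0) at_bot"
      using C0_integral_K[OF C0_trapezoid] at_bot_le_at_infinity
      by (auto simp: C0_def intro: tendsto_mono)
    then have "\<forall>\<^sub>F x in at_bot. x \<le> 0 \<and> (\<integral>y. ?h y \<partial>K x) < (1 - e) / 2"
      using \<open>e < 1\<close> by (intro eventually_conj eventually_le_at_bot order_tendstoD(2)) auto
    then show "\<forall>\<^sub>F x in at_bot. e < cdf (K x) z"
    proof eventually_elim
      case (elim x)
      have "cdf (K x) N - cdf (K x) z = measure (K x) {z<..N}"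
        using N(1) by (rule K.cdf_diff_eq)
      also have "\<dots> \<le> (\<integral>y. ?h y \<partial>K x)"
        using N by (intro K.measure_le_integral_trapezoid) auto
      moreover have "cdf (K 0) N \<le> cdf (K x) N"
        using elim by (intro cdf_K_antimono) simp
      ultimately show ?case
        using elim[THEN conjunct2] N(2) by argo
    qed
  next
    fix e :: real assume "1 < e"
    then show "\<forall>\<^sub>F x in at_bot. cdf (K x) z < e"
      by (intro always_eventually allI) (meson K.cdf_bounded_prob le_less_trans)
  qed
qed

lemma filterlim_quantile_K_at_top:
  assumes "0 < u" "u < 1"
  shows "filterlim (\<lambda>x. quantile (K x) u) at_top at_top"
  unfolding filterlim_at_top
proof
  fix w
  have "\<forall>\<^sub>F x in at_top. cdf (K x) w < u"
    using cdf_K_tendsto_0 assms(1) by (rule order_tendstoD)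
  then show "\<forall>\<^sub>F x in at_top. w \<le> quantile (K x) u"
  proof eventually_elim
    case (elim x)
    then show ?case
      using real_distribution.quantile_le_iff[OF real_distribution_K assms, of x w] by linarith
  qed
qed

lemma filterlim_quantile_K_at_bot:
  assumes "0 < u" "u < 1"
  shows "filterlim (\<lambda>x. quantile (K x) u) at_bot at_bot"
  unfolding filterlim_at_bot
proof
  fix z
  have "\<forall>\<^sub>F x in at_bot. u < cdf (K x) z"
    using cdf_K_tendsto_1 assms(2) by (rule order_tendstoD)
  then show "\<forall>\<^sub>F x in at_bot. quantile (K x) u \<le> z"
  proof eventually_elim
    case (elim x)
    then show ?case
      using real_distribution.quantile_le_iff[OF real_distribution_K assms, of x z] by linarith
  qed
qed

end

lemma mono_Finv: "mono (Finv P t x)"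
  by (cases x) (auto simp: Finv_def intro!: monoI Inf_superset_mono image_mono)

lemma mono_Finv_starting_point:
  assumes "\<And>r r' z. r \<le> r' \<Longrightarrow> cdf (P t r') z \<le> cdf (P t r) z"
  shows "mono (\<lambda>x. Finv P t x u)"
proof (rule monoI)
  fix x y :: ereal assume "x \<le> y"
  then show "Finv P t x u \<le> Finv P t y u"
  proof (cases x; cases y)
    fix r s assume "x = ereal r" "y = ereal s"
    with \<open>x \<le> y\<close> have "{z. u \<le> measure (P t s) {..z}} \<subseteq> {z. u \<le> measure (P t r) {..z}}"
      using assms[of r s] by (auto simp: cdf_def intro: order_trans)
    with \<open>x = ereal r\<close> \<open>y = ereal s\<close> show ?thesis
      by (auto simp: Finv_def intro!: Inf_superset_mono image_mono)
  qed (auto simp: Finv_def)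
qed

lemma Finv_ereal_eq_quantile:
  assumes "real_distribution (P t r)" "0 < u" "u < 1"
  shows "Finv P t (ereal r) u = ereal (quantile (P t r) u)"
  using real_distribution.Inf_ereal_cdf_eq_quantile[OF assms] by (simp add: Finv_def)

lemma distr_Finv:
  assumes "\<And>r. real_distribution (P t r)"
  shows "distr (uniform_measure lborel {0..1::real}) borel (Finv P t x) = Ptilde P t x"
proof -
  have uniform: "prob_space (uniform_measure lborel {0..1::real})"
    by (rule prob_space_uniform_measure) simp_all
  show ?thesis
  proof (cases x)
    case (real r)
    interpret real_distribution "P t r"
      by (rule assms)
    let ?\<Omega> = "restrict_space lborel {0<..<1::real}"
    have "measurable ?\<Omega> borel = measurable (restrict_space borel {0<..<1}) (borel :: real measure)"
      by (intro measurable_cong_sets) (simp_all add: sets_restrict_space)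
    then have quantile_measurable: "quantile (P t r) \<in> borel_measurable ?\<Omega>"
      using borel_measurable_mono_on_fnc[OF mono_on_quantile] by simp
    have "distr (uniform_measure lborel {0..1}) borel (Finv P t x) = distr ?\<Omega> borel (Finv P t x)"
      using mono_Finv by (intro distr_uniform_01_eq_distr_restrict borel_measurable_mono_linorder)
    also have "\<dots> = distr ?\<Omega> borel (ereal \<circ> quantile (P t r))"
      using real
      by (intro distr_cong) (simp_all add: space_restrict_space Finv_ereal_eq_quantile assms)
    also have "\<dots> = distr (distr ?\<Omega> borel (quantile (P t r))) borel ereal"
      using quantile_measurable by (intro distr_distr[symmetric]) simp_all
    also have "\<dots> = Ptilde P t x"
      using real by (simp add: distr_quantile Ptilde_def)
    finally show ?thesis .
  next
    case PInf
    then have "Finv P t x = (\<lambda>_. \<infinity>)"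
      by (simp add: fun_eq_iff Finv_def)
    with PInf uniform show ?thesis
      by (simp add: Ptilde_def prob_space.distr_const)
  next
    case MInf
    then have "Finv P t x = (\<lambda>_. -\<infinity>)"
      by (simp add: fun_eq_iff Finv_def)
    with MInf uniform show ?thesis
      by (simp add: Ptilde_def prob_space.distr_const)
  qed
qed

lemma isCont_Finv:
  assumes "monotone_feller_kernel (P t)" "0 < u" "u < 1"
    and "\<And>r. x = ereal r \<Longrightarrow> isCont (quantile (P t r)) u"
  shows "isCont (\<lambda>y. Finv P t y u) x"
proof -
  interpret monotone_feller_kernel "P t"
    by (rule assms(1))
  let ?g = "\<lambda>y. Finv P t y u" and ?f = "\<lambda>r. quantile (P t r) u"
  have lift: "?g (ereal r) = ereal (?f r)" for r
    using assms(2,3) by (simp add: Finv_ereal_eq_quantile real_distribution_K)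
  show ?thesis
  proof (cases x)
    case (real r)
    with assms have "isCont ?f r"
      by (intro isCont_quantile_K) auto
    then have "isCont ?g (ereal r)"
      by (rule isCont_ereal_lift[of ?g ?f, OF lift])
    with real show ?thesis
      by simp
  next
    case PInf
    have "?g \<infinity> = \<infinity>"
      by (simp add: Finv_def)
    moreover have "filterlim ?f at_top at_top"
      using assms(2,3) by (rule filterlim_quantile_K_at_top)
    ultimately have "isCont ?g \<infinity>"
      by (rule isCont_ereal_lift_PInf[of ?g ?f, OF lift])
    with PInf show ?thesis
      by simp
  next
    case MInf
    have "?g (-\<infinity>) = -\<infinity>"
      by (simp add: Finv_def)
    moreover have "filterlim ?f at_bot at_bot"
      using assms(2,3) by (rule filterlim_quantile_K_at_bot)
    ultimately have "isCont ?g (-\<infinity>)"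
      by (rule isCont_ereal_lift_MInf[of ?g ?f, OF lift])
    with MInf show ?thesis
      by simp
  qed
qed

lemma countable_discont_Finv:
  assumes "monotone_feller_kernel (P t)"
  shows "countable {u \<in> {0..1::real}. \<not> isCont (\<lambda>y. Finv P t y u) x}"
proof -
  interpret K: real_distribution "P t r" for r
    using assms by (simp add: monotone_feller_kernel_def feller_kernel_def)
  define D where
    "D = (case x of ereal r \<Rightarrow> {u \<in> {0<..<1}. \<not> isCont (quantile (P t r)) u} | _ \<Rightarrow> {})"
  have "countable D"
    using mono_on_ctble_discont_open[OF open_greaterThanLessThan K.mono_on_quantile]
    by (cases x) (simp_all add: D_def)
  moreover have "{u \<in> {0..1}. \<not> isCont (\<lambda>y. Finv P t y u) x} \<subseteq> {0, 1} \<union> D"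
  proof
    fix u assume u: "u \<in> {u \<in> {0..1}. \<not> isCont (\<lambda>y. Finv P t y u) x}"
    show "u \<in> {0, 1} \<union> D"
    proof (rule ccontr)
      assume "u \<notin> {0, 1} \<union> D"
      with u have "0 < u" "u < 1" "\<And>r. x = ereal r \<Longrightarrow> isCont (quantile (P t r)) u"
        by (auto simp: D_def less_le)
      then have "isCont (\<lambda>y. Finv P t y u) x"
        by (rule isCont_Finv[of P t, OF assms])
      with u show False
        by simp
    qed
  qed
  ultimately show ?thesis
    by (simp add: countable_subset)
qed

lemma stoch_monotone_cdf_antimono:
  assumes "markov_semigroup P" "stoch_monotone P" "t \<ge> 0" "x \<le> x'"
  shows "cdf (P t x') z \<le> cdf (P t x) z"
proof -
  let ?f = "\<lambda>y. - indicator {..z} y :: real"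
  have "mono ?f" "bounded (range ?f)"
    by (auto simp: mono_def indicator_def intro: boundedI[of _ 1])
  then have "mono (Pf P t ?f)"
    using assms(2,3) unfolding stoch_monotone_def by simp
  moreover have "Pf P t ?f y = - cdf (P t y) z" for y
  proof -
    have "sets (P t y) = sets borel"
      using assms(1,3) by (simp add: markov_semigroup_def)
    then show ?thesis
      by (simp add: Pf_def cdf_def sets_eq_imp_space_eq[of _ borel])
  qed
  ultimately show ?thesis
    using assms(4) by (auto dest: monoD)
qed

lemma monotone_feller_kernel_semigroup:
  assumes "feller_semigroup P" "stoch_monotone P" "t \<ge> 0"
  shows "monotone_feller_kernel (P t)"
proof (intro monotone_feller_kernel.intro feller_kernel.intro monotone_feller_kernel_axioms.intro)
  have markov: "markov_semigroup P"
    using assms(1) by (simp add: feller_semigroup_def)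
  then show "real_distribution (P t x)" for x
    using assms(3) by (simp add: markov_semigroup_def real_distribution_def real_distribution_axioms_def)
  show "C0 (\<lambda>x. \<integral>y. h y \<partial>P t x)" if "C0 h" for h
    using assms(1,3) that by (simp add: feller_semigroup_def Pf_def[abs_def])
  show "cdf (P t x') z \<le> cdf (P t x) z" if "x \<le> x'" for x x' z
    using markov assms(2,3) that by (rule stoch_monotone_cdf_antimono)
qed

theorem lemma3p1:
  fixes P :: "real \<Rightarrow> real \<Rightarrow> real measure"
  assumes "feller_semigroup P" and "stoch_monotone P"
  shows "(\<forall>x t. t \<ge> 0 \<longrightarrow> mono_on {0..1} (Finv P t x))
    \<and> (\<forall>(x::real) t u. t \<ge> 0 \<and> u \<in> {0<..<1} \<longrightarrow> \<bar>Finv P t (ereal x) u\<bar> \<noteq> \<infinity>)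
    \<and> (\<forall>t u. t \<ge> 0 \<and> u \<in> {0<..<1} \<longrightarrow> mono (\<lambda>x. Finv P t x u))
    \<and> (\<forall>x t. t \<ge> 0 \<longrightarrow>
         distr (uniform_measure lborel {0..1::real}) borel (Finv P t x) = Ptilde P t x)
    \<and> (\<forall>t x. t \<ge> 0 \<longrightarrow>
         countable {u \<in> {0..1::real}. \<not> isCont (\<lambda>y. Finv P t y u) x})"
proof -
  have K: "monotone_feller_kernel (P t)" if "t \<ge> 0" for t
    using assms that by (rule monotone_feller_kernel_semigroup)
  have distr: "real_distribution (P t r)" if "t \<ge> 0" for t r
    using K[OF that] by (simp add: monotone_feller_kernel_def feller_kernel_def)
  show ?thesis
  proof (intro conjI allI impI)
    show "mono_on {0..1} (Finv P t x)" for x t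
      by (rule mono_imp_mono_on[OF mono_Finv])
    show "\<bar>Finv P t (ereal x) u\<bar> \<noteq> \<infinity>" if "t \<ge> 0 \<and> u \<in> {0<..<1}" for x t u
      using that by (simp add: Finv_ereal_eq_quantile distr)
    show "mono (\<lambda>x. Finv P t x u)" if "t \<ge> 0 \<and> u \<in> {0<..<1}" for t u
      using that by (intro mono_Finv_starting_point monotone_feller_kernel.cdf_K_antimono[OF K]) auto
    show "distr (uniform_measure lborel {0..1}) borel (Finv P t x) = Ptilde P t x" if "t \<ge> 0" for x t
      using that by (intro distr_Finv distr)
    show "countable {u \<in> {0..1}. \<not> isCont (\<lambda>y. Finv P t y u) x}" if "t \<ge> 0" for t x
      using that by (intro countable_discont_Finv K)
  qed
qed

end
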